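(* Let $g$ be a nontrivial isometry of a $\delta$-hyperbolic space $(X,d)$. Then: (i) $\ell(g)\le s(g)\le\ell(g)+\delta$; (ii) if $s(g)>\delta$, then for every $p\in\mathbb N^*$ and every $x\in X$, $d(x,g^{2^p}x)\ge d(x,gx)+(2^p-1)(s(g)-\delta)$; (iii) if $s(g)>3\delta$, then for every $x\in X$ the sequence $\big(d(x,g^nx)\big)_{n\in\mathbb N^*}$ is strictly increasing.
   Context: $s(g)=\inf_{x\in X}d(x,gx)$ and $\ell(g)=\lim_{k\to\infty}\frac1kd(x,g^kx)$. A $\delta$-hyperbolic space is a geodesic proper metric space all of whose geodesic triangles are $\delta$-thin: for a triangle with vertices $x,y,z$, map it onto the tripod with edges of lengths the Gromov products $(y|z)_x=\frac12(d(x,y)+d(x,z)-d(y,z))$ etc., isometrically on each side and vertices to ends; points with the same image are at distance $\le\delta$. *)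

theory Defs
  imports "HOL-Analysis.Analysis"
begin

definition gromov_product :: "'a::metric_space \<Rightarrow> 'a \<Rightarrow> 'a \<Rightarrow> real" where
  "gromov_product y z x = (dist x y + dist x z - dist y z) / 2"

definition geodesic_segment :: "(real \<Rightarrow> 'a::metric_space) \<Rightarrow> 'a \<Rightarrow> 'a \<Rightarrow> bool" where
  "geodesic_segment c x y \<longleftrightarrow> c 0 = x \<and> c (dist x y) = y \<and>
     (\<forall>s\<in>{0..dist x y}. \<forall>t\<in>{0..dist x y}. dist (c s) (c t) = \<bar>s - t\<bar>)"

definition geodesic_space :: "'a::metric_space itself \<Rightarrow> bool" where
  "geodesic_space _ \<longleftrightarrow> (\<forall>x y::'a. \<exists>c. geodesic_segment c x y)"

definition proper_space :: "'a::metric_space itself \<Rightarrow> bool" where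
  "proper_space _ \<longleftrightarrow> (\<forall>(x::'a) r. compact (cball x r))"

text \<open>Geodesic triangle with vertices x,y,z and sides cxy (from x to y), cyz (from y to z),
  czx (from z to x) is delta-thin: the tripod map (with legs of lengths the Gromov products,
  isometric on each side) identifies only points of two sides at equal distance t from the
  common vertex with t at most the Gromov product at that vertex; such points are delta-close.\<close>
definition thin_triangle :: "real \<Rightarrow> 'a::metric_space \<Rightarrow> 'a \<Rightarrow> 'a \<Rightarrow>
    (real \<Rightarrow> 'a) \<Rightarrow> (real \<Rightarrow> 'a) \<Rightarrow> (real \<Rightarrow> 'a) \<Rightarrow> bool" where
  "thin_triangle \<delta> x y z cxy cyz czx \<longleftrightarrow>
     (\<forall>t\<in>{0..gromov_product y z x}. dist (cxy t) (czx (dist z x - t)) \<le> \<delta>) \<and>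
     (\<forall>t\<in>{0..gromov_product z x y}. dist (cyz t) (cxy (dist x y - t)) \<le> \<delta>) \<and>
     (\<forall>t\<in>{0..gromov_product x y z}. dist (czx t) (cyz (dist y z - t)) \<le> \<delta>)"

definition delta_hyperbolic :: "real \<Rightarrow> 'a::metric_space itself \<Rightarrow> bool" where
  "delta_hyperbolic \<delta> T \<longleftrightarrow> geodesic_space T \<and> proper_space T \<and>
     (\<forall>(x::'a) y z cxy cyz czx. geodesic_segment cxy x y \<and> geodesic_segment cyz y z \<and>
        geodesic_segment czx z x \<longrightarrow> thin_triangle \<delta> x y z cxy cyz czx)"

definition isometry :: "('a::metric_space \<Rightarrow> 'a) \<Rightarrow> bool" where
  "isometry g \<longleftrightarrow> bij g \<and> (\<forall>x y. dist (g x) (g y) = dist x y)"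

definition min_displacement :: "('a::metric_space \<Rightarrow> 'a) \<Rightarrow> real" where
  "min_displacement g = (INF x. dist x (g x))"

text \<open>l(g) = lim_k d(x, g^k x)/k, computed from base point x (independent of x).\<close>
definition stable_length :: "('a::metric_space \<Rightarrow> 'a) \<Rightarrow> 'a \<Rightarrow> real" where
  "stable_length g x = lim (\<lambda>k. dist x ((g ^^ k) x) / real k)"

end

theory Submission
  imports Defs
begin

text \<open>Midpoints of geodesics together with thinness of the triangle x, hx, h(hx) show that some
  point is moved by an isometry h by at most \<delta> plus the excess d(x, h(hx)) - d(x, hx). Applied to
  h = g^(2^p) this forces the doubling estimate (ii), and dividing it by 2^p gives the lower
  bound s(g) - \<delta> for the stable length in (i); the upper bound l(g) \<le> s(g) is the triangle
  inequality. For (iii), Gromov's four-point condition at g^(n+1) x applied to x, g^n x and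
  g^(n+2) x turns d(x, g^n x) < d(x, g^(n+1) x) into d(x, g^(n+1) x) < d(x, g^(n+2) x), because (ii)
  with p = 1 makes the Gromov product of g^n x and g^(n+2) x at g^(n+1) x smaller than
  d(x, gx)/2 - \<delta>.\<close>

lemma gromov_product_commute: "gromov_product y z x = gromov_product z y x"
  by (simp add: gromov_product_def dist_commute add.commute)

lemma gromov_product_nonneg: "gromov_product y z x \<ge> 0"
  using dist_triangle[of y z x] by (simp add: gromov_product_def dist_commute)

lemma gromov_product_le_dist: "gromov_product y z x \<le> dist x y"
  using dist_triangle[of x z y] by (simp add: gromov_product_def dist_commute)

lemma geodesic_segment_dist:
  assumes "geodesic_segment c x y" "s \<in> {0..dist x y}" "t \<in> {0..dist x y}"
  shows "dist (c s) (c t) = \<bar>s - t\<bar>"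
  using assms unfolding geodesic_segment_def by blast

lemma geodesic_segment_endpoints:
  "geodesic_segment c x y \<Longrightarrow> c 0 = x \<and> c (dist x y) = y"
  unfolding geodesic_segment_def by blast

lemma geodesic_segment_image:
  assumes "geodesic_segment c x y" and "\<And>u v. dist (h u) (h v) = dist u v"
  shows "geodesic_segment (h \<circ> c) (h x) (h y)"
  using assms unfolding geodesic_segment_def by auto

lemma delta_hyperbolic_geodesic:
  "delta_hyperbolic \<delta> TYPE('a::metric_space) \<Longrightarrow> \<exists>c. geodesic_segment c (x::'a) y"
  unfolding delta_hyperbolic_def geodesic_space_def by blast

lemma delta_hyperbolic_thin_triangle:
  "delta_hyperbolic \<delta> TYPE('a::metric_space) \<Longrightarrow> geodesic_segment cxy (x::'a) y \<Longrightarrow>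
   geodesic_segment cyz y z \<Longrightarrow> geodesic_segment czx z x \<Longrightarrow> thin_triangle \<delta> x y z cxy cyz czx"
  unfolding delta_hyperbolic_def by blast

lemma delta_hyperbolic_four_point:
  fixes w x y z :: "'a::metric_space"
  assumes hyp: "delta_hyperbolic \<delta> TYPE('a)"
  shows "min (gromov_product x y w) (gromov_product y z w) - \<delta> \<le> gromov_product x z w"
proof -
  obtain cwx where cwx: "geodesic_segment cwx w x" using delta_hyperbolic_geodesic[OF hyp] by blast
  obtain cxy where cxy: "geodesic_segment cxy x y" using delta_hyperbolic_geodesic[OF hyp] by blast
  obtain cyw where cyw: "geodesic_segment cyw y w" using delta_hyperbolic_geodesic[OF hyp] by blast
  obtain cwz where cwz: "geodesic_segment cwz w z" using delta_hyperbolic_geodesic[OF hyp] by blast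
  obtain czy where czy: "geodesic_segment czy z y" using delta_hyperbolic_geodesic[OF hyp] by blast
  define t where "t = min (gromov_product x y w) (gromov_product y z w)"
  have t0: "t \<ge> 0" using gromov_product_nonneg[of x y w] gromov_product_nonneg[of y z w]
    by (simp add: t_def)
  have tx: "t \<le> dist w x" using gromov_product_le_dist[of x y w] by (simp add: t_def)
  have tz: "t \<le> dist w z"
    using gromov_product_le_dist[of z y w] gromov_product_commute[of y z w] by (simp add: t_def)
  \<comment> \<open>the points at distance t from w on [w, x] and [w, z] are \<delta>-close to one point p of [y, w]\<close>
  define p where "p = cyw (dist y w - t)"
  have "dist (cwx t) p \<le> \<delta>"
    using delta_hyperbolic_thin_triangle[OF hyp cwx cxy cyw] t0
    unfolding thin_triangle_def t_def p_def by auto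
  moreover have "dist (cwz t) p \<le> \<delta>"
    using delta_hyperbolic_thin_triangle[OF hyp cyw cwz czy] t0 gromov_product_commute[of y z w]
    unfolding thin_triangle_def t_def p_def by auto
  moreover have "dist x (cwx t) = dist w x - t"
    using geodesic_segment_dist[OF cwx, of "dist w x" t] geodesic_segment_endpoints[OF cwx] t0 tx
    by auto
  moreover have "dist (cwz t) z = dist w z - t"
    using geodesic_segment_dist[OF cwz, of t "dist w z"] geodesic_segment_endpoints[OF cwz] t0 tz
    by auto
  moreover have "dist x z \<le> dist x (cwx t) + dist (cwx t) p + dist p (cwz t) + dist (cwz t) z"
    using dist_triangle[of x z "cwx t"] dist_triangle[of "cwx t" z p] dist_triangle[of p z "cwz t"]
    by linarith
  ultimately have "dist x z \<le> dist w x + dist w z - 2 * t + 2 * \<delta>" by (simp add: dist_commute)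
  thus ?thesis unfolding gromov_product_def t_def by simp
qed

lemma delta_hyperbolic_nonneg: "delta_hyperbolic \<delta> TYPE('a::metric_space) \<Longrightarrow> \<delta> \<ge> 0"
  using delta_hyperbolic_four_point[of \<delta>, where w = "undefined :: 'a" and x = undefined
      and y = undefined and z = undefined]
  by (simp add: gromov_product_def)

lemma delta_hyperbolic_exists_displacement_le:
  fixes h :: "'a::metric_space \<Rightarrow> 'a"
  assumes hyp: "delta_hyperbolic \<delta> TYPE('a)" and iso: "\<And>u v. dist (h u) (h v) = dist u v"
  shows "\<exists>m. dist m (h m) \<le> \<delta> + max 0 (dist x (h (h x)) - dist x (h x))"
proof -
  define D where "D = dist x (h x)"
  define L where "L = dist x (h (h x))"
  obtain c where c: "geodesic_segment c x (h x)" using delta_hyperbolic_geodesic[OF hyp] by blast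
  obtain c' where c': "geodesic_segment c' (h (h x)) x" using delta_hyperbolic_geodesic[OF hyp] by blast
  define gp where "gp = gromov_product (h (h x)) x (h x)"
  have gp: "2 * gp = 2 * D - L"
    unfolding gp_def gromov_product_def D_def L_def using iso[of x "h x"] by (simp add: dist_commute)
  \<comment> \<open>h (c t) on [hx, h(hx)] and c (D - t) on [x, hx] are both at distance t from hx, hence
    \<delta>-close by thinness; m = c (D/2) and h m lie D/2 - t away from them\<close>
  define t where "t = min (D / 2) gp"
  have t0: "t \<ge> 0" using gromov_product_nonneg[of "h (h x)" x "h x"] by (simp add: t_def gp_def D_def)
  have close: "dist (h (c t)) (c (D - t)) \<le> \<delta>"
    using delta_hyperbolic_thin_triangle[OF hyp c geodesic_segment_image[OF c iso] c'] t0
    unfolding thin_triangle_def by (auto simp: t_def gp_def D_def)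
  define m where "m = c (D / 2)"
  have D0: "D \<ge> 0" by (simp add: D_def)
  have "dist m (c (D - t)) = D / 2 - t"
    using geodesic_segment_dist[OF c, of "D / 2" "D - t"] t0 D0 unfolding m_def D_def[symmetric]
    by (auto simp: t_def)
  moreover have "dist (h (c t)) (h m) = D / 2 - t"
    using geodesic_segment_dist[OF c, of t "D / 2"] t0 D0 iso unfolding m_def D_def[symmetric]
    by (auto simp: t_def)
  moreover have "dist m (h m) \<le> dist m (c (D - t)) + dist (c (D - t)) (h (c t)) + dist (h (c t)) (h m)"
    using dist_triangle[of m "h m" "c (D - t)"] dist_triangle[of "c (D - t)" "h m" "h (c t)"]
    by linarith
  ultimately have "dist m (h m) \<le> D - 2 * t + \<delta>" using close by (simp add: dist_commute)
  moreover have "D - 2 * t = max 0 (L - D)" using gp by (auto simp: t_def)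
  ultimately show ?thesis unfolding D_def L_def by (metis add.commute)
qed

lemma isometry_dist: "isometry g \<Longrightarrow> dist (g x) (g y) = dist x y"
  unfolding isometry_def by blast

lemma dist_funpow_funpow:
  fixes g :: "'a::metric_space \<Rightarrow> 'a"
  assumes "\<And>u v. dist (g u) (g v) = dist u v"
  shows "dist ((g ^^ n) x) ((g ^^ n) y) = dist x y"
  using assms by (induction n) auto

lemma dist_funpow_shift:
  fixes g :: "'a::metric_space \<Rightarrow> 'a"
  assumes "\<And>u v. dist (g u) (g v) = dist u v"
  shows "dist ((g ^^ i) x) ((g ^^ (i + j)) x) = dist x ((g ^^ j) x)"
  using dist_funpow_funpow[OF assms, of i x "(g ^^ j) x"] by (simp add: funpow_add)

lemma dist_funpow_add_le:
  fixes g :: "'a::metric_space \<Rightarrow> 'a"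
  assumes "\<And>u v. dist (g u) (g v) = dist u v"
  shows "dist x ((g ^^ (i + j)) x) \<le> dist x ((g ^^ i) x) + dist x ((g ^^ j) x)"
  using dist_triangle[of x "(g ^^ (i + j)) x" "(g ^^ i) x"] dist_funpow_shift[OF assms, of i x j]
  by simp

lemma min_displacement_le: "min_displacement g \<le> dist y (g y)"
  unfolding min_displacement_def by (rule cINF_lower) (auto intro: bdd_belowI[of _ 0])

lemma min_displacement_greatest: "(\<And>y. c \<le> dist y (g y)) \<Longrightarrow> c \<le> min_displacement g"
  unfolding min_displacement_def by (rule cINF_greatest) auto

lemma subadditive_mult_le:
  fixes A :: "nat \<Rightarrow> real"
  assumes sub: "\<And>i j. A (i + j) \<le> A i + A j" and A0: "A 0 = 0"
  shows "A (q * m) \<le> real q * A m"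
proof (induction q)
  case (Suc q)
  have "A (m + q * m) \<le> A m + A (q * m)" using sub .
  with Suc show ?case by (simp add: algebra_simps)
qed (simp add: A0)

lemma subadditive_quotient_le:
  fixes A :: "nat \<Rightarrow> real"
  assumes sub: "\<And>i j. A (i + j) \<le> A i + A j" and nonneg: "\<And>i. A i \<ge> 0" and A0: "A 0 = 0"
    and "m \<ge> 1" "k \<ge> 1"
  shows "A k / k \<le> A m / m + m * A 1 / k"
proof -
  define q where "q = k div m"
  define r where "r = k mod m"
  have k: "k = q * m + r" by (simp add: q_def r_def)
  have "A k \<le> A (q * m) + A (r * 1)" using sub k by (metis mult_1_right)
  also have "\<dots> \<le> q * A m + r * A 1"
    using subadditive_mult_le[OF sub A0] by (meson add_mono)
  also have "\<dots> \<le> q * A m + m * A 1"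
    using \<open>m \<ge> 1\<close> nonneg[of 1] by (simp add: r_def mult_right_mono less_imp_le)
  finally have "A k \<le> q * A m + m * A 1" .
  moreover have "q * A m \<le> k * (A m / m)"
  proof -
    have "real q * real m \<le> real k" using k by (metis le_add1 of_nat_le_iff of_nat_mult)
    hence "q * A m * m \<le> k * A m" using nonneg[of m] by (metis mult.commute mult.left_commute mult_right_mono)
    thus ?thesis using \<open>m \<ge> 1\<close> by (simp add: field_simps)
  qed
  ultimately show ?thesis using \<open>k \<ge> 1\<close> by (simp add: field_simps)
qed

lemma subadditive_quotient_convergent:
  fixes A :: "nat \<Rightarrow> real"
  assumes sub: "\<And>i j. A (i + j) \<le> A i + A j" and nonneg: "\<And>i. A i \<ge> 0" and A0: "A 0 = 0"
  shows "convergent (\<lambda>k. A k / k)"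
proof -
  define L where "L = (INF k\<in>{1..}. A k / k)"
  have bdd: "bdd_below ((\<lambda>k. A k / k) ` {1..})" by (rule bdd_belowI[of _ 0]) (auto simp: nonneg)
  have "(\<lambda>k. A k / k) \<longlonglongrightarrow> L"
  proof (rule LIMSEQ_I)
    fix e :: real assume "e > 0"
    then obtain m where "m \<ge> 1" and m: "A m / m < L + e / 2"
      using cINF_less_iff[OF _ bdd, of "L + e / 2"] unfolding L_def by auto
    obtain N :: nat where N: "N > 2 * m * A 1 / e" using reals_Archimedean2 by blast
    have "\<bar>A k / k - L\<bar> < e" if "k \<ge> max N 1" for k
    proof -
      have "L \<le> A k / k" unfolding L_def using that bdd by (auto intro: cINF_lower)
      moreover have "m * A 1 / k < e / 2"
      proof -
        have "2 * m * A 1 < e * N" using N \<open>e > 0\<close> by (simp add: field_simps)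
        also have "\<dots> \<le> e * k" using that \<open>e > 0\<close> by simp
        finally show ?thesis using that by (simp add: field_simps)
      qed
      moreover have "A k / k \<le> A m / m + m * A 1 / k"
        using subadditive_quotient_le[OF sub nonneg A0 \<open>m \<ge> 1\<close>, of k] that by simp
      ultimately show ?thesis using m by linarith
    qed
    thus "\<exists>N. \<forall>k\<ge>N. norm (A k / k - L) < e" by (metis real_norm_def)
  qed
  thus ?thesis unfolding convergent_def by blast
qed
lemma stable_length_LIMSEQ:
  fixes g :: "'a::metric_space \<Rightarrow> 'a"
  assumes iso: "\<And>u v. dist (g u) (g v) = dist u v"
  shows "(\<lambda>k. dist x ((g ^^ k) x) / k) \<longlonglongrightarrow> stable_length g x"
proof -
  have "convergent (\<lambda>k. dist x ((g ^^ k) x) / k)"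
    by (rule subadditive_quotient_convergent) (simp_all add: dist_funpow_add_le[OF iso])
  thus ?thesis unfolding stable_length_def convergent_LIMSEQ_iff .
qed

lemma stable_length_le_dist:
  fixes g :: "'a::metric_space \<Rightarrow> 'a"
  assumes iso: "\<And>u v. dist (g u) (g v) = dist u v"
  shows "stable_length g x \<le> dist y (g y)"
proof -
  have "dist x ((g ^^ k) x) / k \<le> 2 * dist x y * (1 / k) + dist y (g y)" if "k \<ge> 1" for k
  proof -
    have "dist x ((g ^^ k) x) \<le> dist x y + dist y ((g ^^ k) y) + dist ((g ^^ k) y) ((g ^^ k) x)"
      using dist_triangle[of x "(g ^^ k) x" y] dist_triangle[of y "(g ^^ k) x" "(g ^^ k) y"]
      by linarith
    also have "\<dots> \<le> 2 * dist x y + k * dist y (g y)"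
      using dist_funpow_funpow[OF iso, of k y x]
        subadditive_mult_le[where A = "\<lambda>k. dist y ((g ^^ k) y)" and m = 1 and q = k]
      by (simp add: dist_commute dist_funpow_add_le[OF iso])
    finally show ?thesis using that by (simp add: field_simps)
  qed
  moreover have "(\<lambda>k. 2 * dist x y * (1 / k) + dist y (g y)) \<longlonglongrightarrow> 2 * dist x y * 0 + dist y (g y)"
    by (intro tendsto_intros lim_inverse_n')
  ultimately have "stable_length g x \<le> 2 * dist x y * 0 + dist y (g y)"
    using LIMSEQ_le[OF stable_length_LIMSEQ[OF iso]] by blast
  thus ?thesis by simp
qed

lemma dist_funpow_power_two_ge:
  fixes g :: "'a::metric_space \<Rightarrow> 'a"
  assumes hyp: "delta_hyperbolic \<delta> TYPE('a)" and iso: "\<And>u v. dist (g u) (g v) = dist u v"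
    and displ: "min_displacement g > \<delta>"
  shows "dist x ((g ^^ (2 ^ p)) x) \<ge> dist x (g x) + (2 ^ p - 1) * (min_displacement g - \<delta>)"
proof (induction p arbitrary: x)
  case (Suc p)
  define s where "s = min_displacement g"
  define h where "h = g ^^ (2 ^ p)"
  have h_iso: "\<And>u v. dist (h u) (h v) = dist u v" unfolding h_def by (rule dist_funpow_funpow[OF iso])
  obtain m where m: "dist m (h m) \<le> \<delta> + max 0 (dist x (h (h x)) - dist x (h x))"
    using delta_hyperbolic_exists_displacement_le[OF hyp h_iso] by blast
  have "dist m (h m) \<ge> s + (2 ^ p - 1) * (s - \<delta>)"
    using Suc.IH[of m] min_displacement_le[of g m] unfolding h_def s_def by linarith
  hence "max 0 (dist x (h (h x)) - dist x (h x)) \<ge> 2 ^ p * (s - \<delta>)"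
    using m by (simp add: algebra_simps)
  moreover have "2 ^ p * (s - \<delta>) > 0" using displ by (simp add: s_def)
  ultimately have "dist x (h (h x)) - dist x (h x) \<ge> 2 ^ p * (s - \<delta>)" by linarith
  moreover have "dist x (h x) \<ge> dist x (g x) + (2 ^ p - 1) * (s - \<delta>)"
    using Suc.IH[of x] unfolding h_def s_def .
  moreover have "h (h x) = (g ^^ (2 ^ Suc p)) x" unfolding h_def by (simp add: funpow_add mult_2)
  ultimately show ?case by (simp add: algebra_simps s_def)
qed simp

lemma min_displacement_le_stable_length:
  fixes g :: "'a::metric_space \<Rightarrow> 'a"
  assumes hyp: "delta_hyperbolic \<delta> TYPE('a)" and iso: "\<And>u v. dist (g u) (g v) = dist u v"
  shows "min_displacement g \<le> stable_length g x + \<delta>"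
proof (cases "min_displacement g > \<delta>")
  case False
  moreover have "stable_length g x \<ge> 0"
    by (rule LIMSEQ_le_const[OF stable_length_LIMSEQ[OF iso]]) auto
  ultimately show ?thesis by linarith
next
  case True
  define e where "e = min_displacement g - \<delta>"
  have "e - e * (1 / 2) ^ p \<le> dist x ((g ^^ (2 ^ p)) x) / real (2 ^ p)" for p
  proof -
    have "dist x ((g ^^ (2 ^ p)) x) \<ge> (2 ^ p - 1) * e"
      using dist_funpow_power_two_ge[OF hyp iso True, of x p] zero_le_dist[of x "g x"]
      unfolding e_def by linarith
    moreover have "e - e * (1 / 2) ^ p = (2 ^ p - 1) * e / 2 ^ p" by (simp add: field_simps power_divide)
    ultimately show ?thesis by (simp add: divide_right_mono)
  qed
  moreover have "(\<lambda>p. dist x ((g ^^ (2 ^ p)) x) / real (2 ^ p)) \<longlonglongrightarrow> stable_length g x"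
    using LIMSEQ_subseq_LIMSEQ[OF stable_length_LIMSEQ[OF iso], of "\<lambda>p. 2 ^ p"]
    by (simp add: strict_mono_def comp_def)
  moreover have "(\<lambda>p. e - e * (1 / 2) ^ p) \<longlonglongrightarrow> e - e * 0"
    by (intro tendsto_intros LIMSEQ_realpow_zero) auto
  ultimately have "e - e * 0 \<le> stable_length g x" using LIMSEQ_le by blast
  thus ?thesis by (simp add: e_def)
qed

lemma dist_funpow_less_Suc:
  fixes g :: "'a::metric_space \<Rightarrow> 'a"
  assumes hyp: "delta_hyperbolic \<delta> TYPE('a)" and iso: "\<And>u v. dist (g u) (g v) = dist u v"
    and displ: "min_displacement g > 3 * \<delta>"
  shows "dist x ((g ^^ n) x) < dist x ((g ^^ Suc n) x)"
proof (induction n)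
  case 0
  have "0 < dist x (g x)" using displ min_displacement_le[of g x] delta_hyperbolic_nonneg[OF hyp]
    by linarith
  thus ?case by simp
next
  case (Suc n)
  define a where "a k = dist x ((g ^^ k) x)" for k
  define Q where "Q = (g ^^ n) x"
  define R where "R = (g ^^ (n + 1)) x"
  define S where "S = (g ^^ (n + 2)) x"
  have RQ: "dist R Q = a 1" and RS: "dist R S = a 1" and QS: "dist Q S = a 2"
    using dist_funpow_shift[OF iso, of n x 1] dist_funpow_shift[OF iso, of "n + 1" x 1]
      dist_funpow_shift[OF iso, of n x 2]
    by (simp_all add: a_def Q_def R_def S_def dist_commute numeral_2_eq_2)
  have "a 2 \<ge> a 1 + (min_displacement g - \<delta>)"
    using dist_funpow_power_two_ge[OF hyp iso, of x 1] displ delta_hyperbolic_nonneg[OF hyp]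
    by (simp add: a_def)
  moreover have "2 * gromov_product Q S R = 2 * a 1 - a 2"
    using RQ RS QS unfolding gromov_product_def by simp
  ultimately have "2 * gromov_product Q S R + 2 * \<delta> < a 1" using displ by linarith
  moreover have "2 * gromov_product Q x R > a 1"
    using RQ Suc.IH by (simp add: gromov_product_def a_def Q_def R_def dist_commute)
  moreover have "min (gromov_product Q x R) (gromov_product x S R) - \<delta> \<le> gromov_product Q S R"
    by (rule delta_hyperbolic_four_point[OF hyp])
  ultimately have "2 * gromov_product x S R < a 1" by (auto simp: min_def split: if_splits)
  thus ?case using RS by (simp add: gromov_product_def a_def R_def S_def dist_commute)
qed

theorem lemma8p15:
  fixes g :: "'a::metric_space \<Rightarrow> 'a" and \<delta> :: real
  assumes hyp: "delta_hyperbolic \<delta> TYPE('a)"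
    and iso: "isometry g"
    and nontriv: "g \<noteq> id"
  shows "(\<forall>x. stable_length g x \<le> min_displacement g \<and>
              min_displacement g \<le> stable_length g x + \<delta>)
    \<and> (min_displacement g > \<delta> \<longrightarrow>
         (\<forall>p::nat. p \<ge> 1 \<longrightarrow> (\<forall>x.
            dist x ((g ^^ (2 ^ p)) x) \<ge> dist x (g x) + (2 ^ p - 1) * (min_displacement g - \<delta>))))
    \<and> (min_displacement g > 3 * \<delta> \<longrightarrow>
         (\<forall>x. \<forall>n::nat. n \<ge> 1 \<longrightarrow> dist x ((g ^^ n) x) < dist x ((g ^^ Suc n) x)))"
proof -
  have dist_iso: "\<And>u v. dist (g u) (g v) = dist u v" using iso by (rule isometry_dist)
  show ?thesis
    using stable_length_le_dist[OF dist_iso] min_displacement_greatest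
      min_displacement_le_stable_length[OF hyp dist_iso] dist_funpow_power_two_ge[OF hyp dist_iso]
      dist_funpow_less_Suc[OF hyp dist_iso]
    by blast
qed

end
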